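(* The variety $\mathcal{WHB}$ of WHB-algebras has the finite model property, i.e. every equation that fails in some WHB-algebra fails in some finite WHB-algebra.
   Context: A WHB-algebra is an algebra $(A,\wedge,\vee,\to,\leftarrow,0,1)$ such that $(A,\wedge,\vee,0,1)$ is a bounded distributive lattice and for all $a,b,c\in A$: $a\to a=1$; $a\to(b\wedge c)=(a\to b)\wedge(a\to c)$; $(a\vee b)\to c=(a\to c)\wedge(b\to c)$; $(a\to b)\wedge(b\to c)\le a\to c$; $a\leftarrow a=0$; $(a\vee b)\leftarrow c=(a\leftarrow c)\vee(b\leftarrow c)$; $a\leftarrow(b\wedge c)=(a\leftarrow b)\vee(a\leftarrow c)$; $a\leftarrow c\le(a\leftarrow b)\vee(b\leftarrow c)$; $a\wedge((a\to b)\leftarrow 0)\le b$; $a\le b\vee(1\to(a\leftarrow b))$. *)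

theory Defs
  imports Main
begin

text \<open>Algebras in the signature (meet, join, imp, coimp, 0, 1), given by a carrier set
  and total operations (only their behaviour on the carrier matters).\<close>
record 'a whb_struct =
  car   :: "'a set"
  mt    :: "'a \<Rightarrow> 'a \<Rightarrow> 'a"
  jn    :: "'a \<Rightarrow> 'a \<Rightarrow> 'a"
  im    :: "'a \<Rightarrow> 'a \<Rightarrow> 'a"
  coim  :: "'a \<Rightarrow> 'a \<Rightarrow> 'a"
  zr    :: "'a"
  on    :: "'a"

definition leq :: "('a, 'b) whb_struct_scheme \<Rightarrow> 'a \<Rightarrow> 'a \<Rightarrow> bool" where
  "leq A a b \<longleftrightarrow> mt A a b = a"

definition bdl :: "('a, 'b) whb_struct_scheme \<Rightarrow> bool" where
  "bdl A \<longleftrightarrow>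
     zr A \<in> car A \<and> on A \<in> car A \<and>
     (\<forall>a\<in>car A. \<forall>b\<in>car A. mt A a b \<in> car A \<and> jn A a b \<in> car A) \<and>
     (\<forall>a\<in>car A. \<forall>b\<in>car A. mt A a b = mt A b a \<and> jn A a b = jn A b a) \<and>
     (\<forall>a\<in>car A. \<forall>b\<in>car A. \<forall>c\<in>car A.
        mt A a (mt A b c) = mt A (mt A a b) c \<and> jn A a (jn A b c) = jn A (jn A a b) c) \<and>
     (\<forall>a\<in>car A. \<forall>b\<in>car A. mt A a (jn A a b) = a \<and> jn A a (mt A a b) = a) \<and>
     (\<forall>a\<in>car A. \<forall>b\<in>car A. \<forall>c\<in>car A. mt A a (jn A b c) = jn A (mt A a b) (mt A a c)) \<and>
     (\<forall>a\<in>car A. mt A (zr A) a = zr A \<and> jn A (on A) a = on A)"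

definition whb_algebra :: "('a, 'b) whb_struct_scheme \<Rightarrow> bool" where
  "whb_algebra A \<longleftrightarrow> bdl A \<and>
     (\<forall>a\<in>car A. \<forall>b\<in>car A. im A a b \<in> car A \<and> coim A a b \<in> car A) \<and>
     (\<forall>a\<in>car A. im A a a = on A) \<and>
     (\<forall>a\<in>car A. \<forall>b\<in>car A. \<forall>c\<in>car A. im A a (mt A b c) = mt A (im A a b) (im A a c)) \<and>
     (\<forall>a\<in>car A. \<forall>b\<in>car A. \<forall>c\<in>car A. im A (jn A a b) c = mt A (im A a c) (im A b c)) \<and>
     (\<forall>a\<in>car A. \<forall>b\<in>car A. \<forall>c\<in>car A. leq A (mt A (im A a b) (im A b c)) (im A a c)) \<and>
     (\<forall>a\<in>car A. coim A a a = zr A) \<and>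
     (\<forall>a\<in>car A. \<forall>b\<in>car A. \<forall>c\<in>car A. coim A (jn A a b) c = jn A (coim A a c) (coim A b c)) \<and>
     (\<forall>a\<in>car A. \<forall>b\<in>car A. \<forall>c\<in>car A. coim A a (mt A b c) = jn A (coim A a b) (coim A a c)) \<and>
     (\<forall>a\<in>car A. \<forall>b\<in>car A. \<forall>c\<in>car A. leq A (coim A a c) (jn A (coim A a b) (coim A b c))) \<and>
     (\<forall>a\<in>car A. \<forall>b\<in>car A. leq A (mt A a (coim A (im A a b) (zr A))) b) \<and>
     (\<forall>a\<in>car A. \<forall>b\<in>car A. leq A a (jn A b (im A (on A) (coim A a b))))"

datatype trm = Var nat | Meet trm trm | Join trm trm | Imp trm trm | Coimp trm trm
  | Bot | Top

primrec eval :: "('a, 'b) whb_struct_scheme \<Rightarrow> (nat \<Rightarrow> 'a) \<Rightarrow> trm \<Rightarrow> 'a" where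
  "eval A v (Var n) = v n"
| "eval A v (Meet s t) = mt A (eval A v s) (eval A v t)"
| "eval A v (Join s t) = jn A (eval A v s) (eval A v t)"
| "eval A v (Imp s t) = im A (eval A v s) (eval A v t)"
| "eval A v (Coimp s t) = coim A (eval A v s) (eval A v t)"
| "eval A v Bot = zr A"
| "eval A v Top = on A"

definition holds :: "('a, 'b) whb_struct_scheme \<Rightarrow> trm \<Rightarrow> trm \<Rightarrow> bool" where
  "holds A s t \<longleftrightarrow> (\<forall>v. (\<forall>n. v n \<in> car A) \<longrightarrow> eval A v s = eval A v t)"

end

theory Submission
  imports Defs
begin

(* With \<box>x = 1 \<rightarrow> x and \<diamond>x = x \<leftarrow> 0, the operator \<diamond> is left adjoint to \<box>, the
   implication a \<rightarrow> b is the largest \<box>x with a \<and> x \<le> b (namely \<box>\<diamond>(a \<rightarrow> b)), and dually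
   a \<leftarrow> b is the least \<diamond>x with a \<le> b \<or> x (namely \<diamond>\<box>(a \<leftarrow> b)).
   Fix a valuation refuting s = t and let D be the bounded sublattice generated by the values c of
   the subterms of s and t together with \<diamond>c and \<box>c; it is finite. As a finite distributive
   lattice, D has a Heyting implication and co-implication. Interpreting a \<rightarrow> b as the greatest
   element of D below \<box> of the Heyting implication, and a \<leftarrow> b as the least element of D above
   \<diamond> of the co-implication, makes D a WHB-algebra. On the values of subterms these operations agree
   with those of A, because the witnesses \<diamond>(a \<rightarrow> b) and \<box>(a \<leftarrow> b) above lie in D; so the
   valuation still refutes s = t in D. *)

section \<open>Lattice laws\<close>

locale whb =
  fixes A :: "('a, 'b) whb_struct_scheme"
  assumes whb: "whb_algebra A"
begin

abbreviation meet (infixl "\<sqinter>" 70) where "x \<sqinter> y \<equiv> mt A x y"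
abbreviation join (infixl "\<squnion>" 65) where "x \<squnion> y \<equiv> jn A x y"
abbreviation imp (infix "\<rightarrow>" 60) where "x \<rightarrow> y \<equiv> im A x y"
abbreviation coimp (infix "\<leftarrow>" 60) where "x \<leftarrow> y \<equiv> coim A x y"
abbreviation bot ("\<zero>") where "\<zero> \<equiv> zr A"
abbreviation top ("\<one>") where "\<one> \<equiv> on A"
abbreviation le (infix "\<preceq>" 50) where "x \<preceq> y \<equiv> leq A x y"

lemma bdl: "bdl A"
  using whb by (simp add: whb_algebra_def)

lemma closed [simp]:
  "\<zero> \<in> car A" "\<one> \<in> car A"
  "x \<in> car A \<Longrightarrow> y \<in> car A \<Longrightarrow> x \<sqinter> y \<in> car A"
  "x \<in> car A \<Longrightarrow> y \<in> car A \<Longrightarrow> x \<squnion> y \<in> car A"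
  "x \<in> car A \<Longrightarrow> y \<in> car A \<Longrightarrow> x \<rightarrow> y \<in> car A"
  "x \<in> car A \<Longrightarrow> y \<in> car A \<Longrightarrow> x \<leftarrow> y \<in> car A"
  using whb unfolding whb_algebra_def bdl_def by (elim conjE; meson)+

lemma meet_comm: "x \<in> car A \<Longrightarrow> y \<in> car A \<Longrightarrow> x \<sqinter> y = y \<sqinter> x"
  using bdl unfolding bdl_def by (elim conjE) meson

lemma join_comm: "x \<in> car A \<Longrightarrow> y \<in> car A \<Longrightarrow> x \<squnion> y = y \<squnion> x"
  using bdl unfolding bdl_def by (elim conjE) meson

lemma meet_assoc:
  "x \<in> car A \<Longrightarrow> y \<in> car A \<Longrightarrow> z \<in> car A \<Longrightarrow> x \<sqinter> (y \<sqinter> z) = x \<sqinter> y \<sqinter> z"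
  using bdl unfolding bdl_def by (elim conjE) meson

lemma join_assoc:
  "x \<in> car A \<Longrightarrow> y \<in> car A \<Longrightarrow> z \<in> car A \<Longrightarrow> x \<squnion> (y \<squnion> z) = x \<squnion> y \<squnion> z"
  using bdl unfolding bdl_def by (elim conjE) meson

lemma meet_absorb: "x \<in> car A \<Longrightarrow> y \<in> car A \<Longrightarrow> x \<sqinter> (x \<squnion> y) = x"
  using bdl unfolding bdl_def by (elim conjE) meson

lemma join_absorb: "x \<in> car A \<Longrightarrow> y \<in> car A \<Longrightarrow> x \<squnion> (x \<sqinter> y) = x"
  using bdl unfolding bdl_def by (elim conjE) meson

lemma meet_join_distrib:
  "x \<in> car A \<Longrightarrow> y \<in> car A \<Longrightarrow> z \<in> car A \<Longrightarrow> x \<sqinter> (y \<squnion> z) = x \<sqinter> y \<squnion> x \<sqinter> z"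
  using bdl unfolding bdl_def by (elim conjE) meson

lemma bot_meet: "x \<in> car A \<Longrightarrow> \<zero> \<sqinter> x = \<zero>"
  using bdl unfolding bdl_def by (elim conjE) meson

lemma top_join: "x \<in> car A \<Longrightarrow> \<one> \<squnion> x = \<one>"
  using bdl unfolding bdl_def by (elim conjE) meson

lemma imp_self: "x \<in> car A \<Longrightarrow> x \<rightarrow> x = \<one>"
  using whb unfolding whb_algebra_def by (elim conjE) meson

lemma imp_meet:
  "x \<in> car A \<Longrightarrow> y \<in> car A \<Longrightarrow> z \<in> car A \<Longrightarrow> x \<rightarrow> y \<sqinter> z = (x \<rightarrow> y) \<sqinter> (x \<rightarrow> z)"
  using whb unfolding whb_algebra_def by (elim conjE) meson

lemma imp_join:
  "x \<in> car A \<Longrightarrow> y \<in> car A \<Longrightarrow> z \<in> car A \<Longrightarrow> x \<squnion> y \<rightarrow> z = (x \<rightarrow> z) \<sqinter> (y \<rightarrow> z)"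
  using whb unfolding whb_algebra_def by (elim conjE) meson

lemma coimp_self: "x \<in> car A \<Longrightarrow> x \<leftarrow> x = \<zero>"
  using whb unfolding whb_algebra_def by (elim conjE) meson

lemma coimp_join:
  "x \<in> car A \<Longrightarrow> y \<in> car A \<Longrightarrow> z \<in> car A \<Longrightarrow> x \<squnion> y \<leftarrow> z = (x \<leftarrow> z) \<squnion> (y \<leftarrow> z)"
  using whb unfolding whb_algebra_def by (elim conjE) meson

lemma coimp_meet:
  "x \<in> car A \<Longrightarrow> y \<in> car A \<Longrightarrow> z \<in> car A \<Longrightarrow> x \<leftarrow> y \<sqinter> z = (x \<leftarrow> y) \<squnion> (x \<leftarrow> z)"
  using whb unfolding whb_algebra_def by (elim conjE) meson

lemma meet_coimp_imp_le:
  "x \<in> car A \<Longrightarrow> y \<in> car A \<Longrightarrow> x \<sqinter> ((x \<rightarrow> y) \<leftarrow> \<zero>) \<preceq> y"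
  using whb unfolding whb_algebra_def by (elim conjE) meson

lemma le_join_imp_coimp:
  "x \<in> car A \<Longrightarrow> y \<in> car A \<Longrightarrow> x \<preceq> y \<squnion> (\<one> \<rightarrow> (x \<leftarrow> y))"
  using whb unfolding whb_algebra_def by (elim conjE) meson

lemma meet_idem: "x \<in> car A \<Longrightarrow> x \<sqinter> x = x"
  by (metis closed(3) join_absorb meet_absorb)

lemma le_iff_join:
  "x \<in> car A \<Longrightarrow> y \<in> car A \<Longrightarrow> x \<preceq> y \<longleftrightarrow> x \<squnion> y = y"
  unfolding leq_def by (metis join_absorb join_comm meet_absorb meet_comm)

lemma le_refl: "x \<in> car A \<Longrightarrow> x \<preceq> x"
  by (simp add: leq_def meet_idem)

lemma le_antisym:
  "x \<in> car A \<Longrightarrow> y \<in> car A \<Longrightarrow> x \<preceq> y \<Longrightarrow> y \<preceq> x \<Longrightarrow> x = y"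
  unfolding leq_def by (metis meet_comm)

lemma le_trans:
  "x \<in> car A \<Longrightarrow> y \<in> car A \<Longrightarrow> z \<in> car A \<Longrightarrow> x \<preceq> y \<Longrightarrow> y \<preceq> z \<Longrightarrow> x \<preceq> z"
  unfolding leq_def by (metis meet_assoc)

lemma meet_le1: "x \<in> car A \<Longrightarrow> y \<in> car A \<Longrightarrow> x \<sqinter> y \<preceq> x"
  unfolding leq_def by (metis meet_assoc meet_comm meet_idem)

lemma meet_le2: "x \<in> car A \<Longrightarrow> y \<in> car A \<Longrightarrow> x \<sqinter> y \<preceq> y"
  unfolding leq_def by (simp add: meet_assoc[symmetric] meet_idem)

lemma join_ge1: "x \<in> car A \<Longrightarrow> y \<in> car A \<Longrightarrow> x \<preceq> x \<squnion> y"
  by (simp add: leq_def meet_absorb)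

lemma join_ge2: "x \<in> car A \<Longrightarrow> y \<in> car A \<Longrightarrow> y \<preceq> x \<squnion> y"
  using join_ge1[of y x] by (simp add: join_comm)

lemma le_meet_iff:
  assumes "x \<in> car A" "y \<in> car A" "z \<in> car A"
  shows "z \<preceq> x \<sqinter> y \<longleftrightarrow> z \<preceq> x \<and> z \<preceq> y"
proof
  assume "z \<preceq> x \<sqinter> y"
  then show "z \<preceq> x \<and> z \<preceq> y"
    using assms meet_le1 meet_le2 le_trans[of z "x \<sqinter> y"] by (meson closed(3))
next
  assume "z \<preceq> x \<and> z \<preceq> y"
  then show "z \<preceq> x \<sqinter> y"
    using assms by (simp add: leq_def meet_assoc)
qed

lemma join_le_iff:
  assumes "x \<in> car A" "y \<in> car A" "z \<in> car A"
  shows "x \<squnion> y \<preceq> z \<longleftrightarrow> x \<preceq> z \<and> y \<preceq> z"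
proof
  assume "x \<squnion> y \<preceq> z"
  then show "x \<preceq> z \<and> y \<preceq> z"
    using assms join_ge1 join_ge2 le_trans[of _ "x \<squnion> y" z] by (meson closed(4))
next
  assume "x \<preceq> z \<and> y \<preceq> z"
  then show "x \<squnion> y \<preceq> z"
    using assms by (simp add: le_iff_join join_assoc[symmetric])
qed

lemma bot_le: "x \<in> car A \<Longrightarrow> \<zero> \<preceq> x"
  by (simp add: leq_def bot_meet)

lemma le_top: "x \<in> car A \<Longrightarrow> x \<preceq> \<one>"
  using top_join[of x] join_comm[of x \<one>] by (simp add: le_iff_join)

lemma top_meet: "x \<in> car A \<Longrightarrow> \<one> \<sqinter> x = x"
  using le_top[of x] meet_comm[of x \<one>] by (simp add: leq_def)

lemma bot_join: "x \<in> car A \<Longrightarrow> \<zero> \<squnion> x = x"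
  using bot_le[of x] by (simp add: le_iff_join)

lemma meet_join_distrib_right:
  "x \<in> car A \<Longrightarrow> y \<in> car A \<Longrightarrow> z \<in> car A \<Longrightarrow> (x \<squnion> y) \<sqinter> z = x \<sqinter> z \<squnion> y \<sqinter> z"
  by (simp add: meet_comm[of _ z] meet_join_distrib)

lemma join_meet_distrib:
  assumes "x \<in> car A" "y \<in> car A" "z \<in> car A"
  shows "x \<squnion> y \<sqinter> z = (x \<squnion> y) \<sqinter> (x \<squnion> z)"
proof -
  have "(x \<squnion> y) \<sqinter> (x \<squnion> z) = (x \<squnion> y) \<sqinter> x \<squnion> (x \<squnion> y) \<sqinter> z"
    using assms by (simp add: meet_join_distrib)
  also have "\<dots> = x \<squnion> (x \<sqinter> z \<squnion> y \<sqinter> z)"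
    using assms by (simp add: meet_comm[of _ x] meet_absorb meet_join_distrib_right)
  also have "\<dots> = x \<squnion> y \<sqinter> z"
    using assms by (simp add: join_assoc join_absorb)
  finally show ?thesis ..
qed

lemma join_meet_distrib_right:
  "x \<in> car A \<Longrightarrow> y \<in> car A \<Longrightarrow> z \<in> car A \<Longrightarrow> x \<sqinter> y \<squnion> z = (x \<squnion> z) \<sqinter> (y \<squnion> z)"
  by (simp add: join_comm[of _ z] join_meet_distrib)

lemma meet_mono:
  assumes "x \<in> car A" "y \<in> car A" "x' \<in> car A" "y' \<in> car A" "x \<preceq> x'" "y \<preceq> y'"
  shows "x \<sqinter> y \<preceq> x' \<sqinter> y'"
proof -
  have "x \<sqinter> y \<preceq> x'" using assms meet_le1 le_trans[of "x \<sqinter> y" x x'] by simp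
  moreover have "x \<sqinter> y \<preceq> y'" using assms meet_le2 le_trans[of "x \<sqinter> y" y y'] by simp
  ultimately show ?thesis using assms by (simp add: le_meet_iff)
qed

lemma join_mono:
  assumes "x \<in> car A" "y \<in> car A" "x' \<in> car A" "y' \<in> car A" "x \<preceq> x'" "y \<preceq> y'"
  shows "x \<squnion> y \<preceq> x' \<squnion> y'"
proof -
  have "x \<preceq> x' \<squnion> y'" using assms join_ge1 le_trans[of x x' "x' \<squnion> y'"] by simp
  moreover have "y \<preceq> x' \<squnion> y'" using assms join_ge2 le_trans[of y y' "x' \<squnion> y'"] by simp
  ultimately show ?thesis using assms by (simp add: join_le_iff)
qed

section \<open>Box and diamond\<close>

lemma imp_mono:
  "x \<in> car A \<Longrightarrow> y \<in> car A \<Longrightarrow> z \<in> car A \<Longrightarrow> y \<preceq> z \<Longrightarrow> x \<rightarrow> y \<preceq> x \<rightarrow> z"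
  unfolding leq_def by (simp flip: imp_meet)

lemma imp_antimono:
  "x \<in> car A \<Longrightarrow> y \<in> car A \<Longrightarrow> z \<in> car A \<Longrightarrow> x \<preceq> y \<Longrightarrow> y \<rightarrow> z \<preceq> x \<rightarrow> z"
  unfolding leq_def by (metis closed(5) imp_join le_iff_join leq_def meet_comm)

lemma coimp_mono:
  "x \<in> car A \<Longrightarrow> y \<in> car A \<Longrightarrow> z \<in> car A \<Longrightarrow> x \<preceq> y \<Longrightarrow> x \<leftarrow> z \<preceq> y \<leftarrow> z"
  by (simp add: le_iff_join flip: coimp_join)

lemma coimp_antimono:
  "x \<in> car A \<Longrightarrow> y \<in> car A \<Longrightarrow> z \<in> car A \<Longrightarrow> y \<preceq> z \<Longrightarrow> x \<leftarrow> z \<preceq> x \<leftarrow> y"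
  by (metis closed(6) coimp_meet join_comm le_iff_join leq_def)

definition box :: "'a \<Rightarrow> 'a" ("\<box>_" [80] 80) where
  "\<box>x = \<one> \<rightarrow> x"

definition dia :: "'a \<Rightarrow> 'a" ("\<diamond>_" [80] 80) where
  "\<diamond>x = x \<leftarrow> \<zero>"

lemma box_closed [simp]: "x \<in> car A \<Longrightarrow> \<box>x \<in> car A"
  and dia_closed [simp]: "x \<in> car A \<Longrightarrow> \<diamond>x \<in> car A"
  by (simp_all add: box_def dia_def)

lemma box_meet:
  "x \<in> car A \<Longrightarrow> y \<in> car A \<Longrightarrow> \<box>(x \<sqinter> y) = \<box>x \<sqinter> \<box>y"
  by (simp add: box_def imp_meet)

lemma box_top: "\<box>\<one> = \<one>"
  by (simp add: box_def imp_self)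

lemma box_mono:
  "x \<in> car A \<Longrightarrow> y \<in> car A \<Longrightarrow> x \<preceq> y \<Longrightarrow> \<box>x \<preceq> \<box>y"
  by (simp add: box_def imp_mono)

lemma dia_join:
  "x \<in> car A \<Longrightarrow> y \<in> car A \<Longrightarrow> \<diamond>(x \<squnion> y) = \<diamond>x \<squnion> \<diamond>y"
  by (simp add: dia_def coimp_join)

lemma dia_bot: "\<diamond>\<zero> = \<zero>"
  by (simp add: dia_def coimp_self)

lemma dia_mono:
  "x \<in> car A \<Longrightarrow> y \<in> car A \<Longrightarrow> x \<preceq> y \<Longrightarrow> \<diamond>x \<preceq> \<diamond>y"
  by (simp add: dia_def coimp_mono)

lemma le_box_dia: "x \<in> car A \<Longrightarrow> x \<preceq> \<box>\<diamond>x"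
  using le_join_imp_coimp[of x \<zero>] by (simp add: box_def dia_def bot_join)

lemma dia_box_le: "x \<in> car A \<Longrightarrow> \<diamond>\<box>x \<preceq> x"
  using meet_coimp_imp_le[of \<one> x] by (simp add: box_def dia_def top_meet)

lemma dia_le_iff_le_box:
  "x \<in> car A \<Longrightarrow> y \<in> car A \<Longrightarrow> \<diamond>x \<preceq> y \<longleftrightarrow> x \<preceq> \<box>y"
  by (meson box_closed box_mono dia_box_le dia_closed dia_mono le_box_dia le_trans)

lemma box_le_imp:
  assumes "x \<in> car A" "y \<in> car A" "z \<in> car A" "x \<sqinter> y \<preceq> z"
  shows "\<box>y \<preceq> x \<rightarrow> z"
proof -
  have "\<box>y \<preceq> x \<rightarrow> y"
    using assms le_top imp_antimono unfolding box_def by simp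
  also have "x \<rightarrow> y = x \<rightarrow> x \<sqinter> y"
    using assms by (simp add: imp_meet imp_self top_meet)
  finally show ?thesis
    using assms imp_mono[of x "x \<sqinter> y" z] le_trans[of "\<box>y" "x \<rightarrow> x \<sqinter> y" "x \<rightarrow> z"] by simp
qed

lemma coimp_le_dia:
  assumes "x \<in> car A" "y \<in> car A" "z \<in> car A" "x \<preceq> y \<squnion> z"
  shows "x \<leftarrow> y \<preceq> \<diamond>z"
proof -
  have "x \<leftarrow> y \<preceq> y \<squnion> z \<leftarrow> y"
    using assms by (simp add: coimp_mono)
  also have "y \<squnion> z \<leftarrow> y = z \<leftarrow> y"
    using assms by (simp add: coimp_join coimp_self bot_join)
  finally show ?thesis
    using assms bot_le[of y] coimp_antimono[of z \<zero> y] le_trans[of "x \<leftarrow> y" "z \<leftarrow> y" "z \<leftarrow> \<zero>"]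
    unfolding dia_def by simp
qed

section \<open>Finite meets and joins\<close>

definition is_big_meet :: "'a set \<Rightarrow> 'a \<Rightarrow> bool" where
  "is_big_meet S m \<longleftrightarrow> m \<in> car A \<and> (\<forall>x\<in>car A. x \<preceq> m \<longleftrightarrow> (\<forall>s\<in>S. x \<preceq> s))"

definition is_big_join :: "'a set \<Rightarrow> 'a \<Rightarrow> bool" where
  "is_big_join S m \<longleftrightarrow> m \<in> car A \<and> (\<forall>x\<in>car A. m \<preceq> x \<longleftrightarrow> (\<forall>s\<in>S. s \<preceq> x))"

definition big_meet :: "'a set \<Rightarrow> 'a" ("\<Sqinter>_" [900] 900) where
  "\<Sqinter>S = (SOME m. is_big_meet S m)"

definition big_join :: "'a set \<Rightarrow> 'a" ("\<Squnion>_" [900] 900) where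
  "\<Squnion>S = (SOME m. is_big_join S m)"

lemma big_meet_eqI:
  assumes "is_big_meet S m"
  shows "\<Sqinter>S = m"
  unfolding big_meet_def
proof (rule some_equality)
  show "is_big_meet S m" by fact
  fix m' assume "is_big_meet S m'"
  with assms show "m' = m"
    unfolding is_big_meet_def by (meson le_antisym le_refl)
qed

lemma big_join_eqI:
  assumes "is_big_join S m"
  shows "\<Squnion>S = m"
  unfolding big_join_def
proof (rule some_equality)
  show "is_big_join S m" by fact
  fix m' assume "is_big_join S m'"
  with assms show "m' = m"
    unfolding is_big_join_def by (meson le_antisym le_refl)
qed

lemma is_big_meet_big_meet: "finite S \<Longrightarrow> S \<subseteq> car A \<Longrightarrow> is_big_meet S (\<Sqinter>S)"
proof (induction S rule: finite_induct)
  case empty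
  then have "is_big_meet {} \<one>"
    by (simp add: is_big_meet_def le_top)
  then show ?case
    by (simp add: big_meet_eqI)
next
  case (insert s S)
  then have "is_big_meet (insert s S) (s \<sqinter> \<Sqinter>S)"
    by (auto simp: is_big_meet_def le_meet_iff)
  then show ?case
    by (simp add: big_meet_eqI)
qed

lemma is_big_join_big_join: "finite S \<Longrightarrow> S \<subseteq> car A \<Longrightarrow> is_big_join S (\<Squnion>S)"
proof (induction S rule: finite_induct)
  case empty
  then have "is_big_join {} \<zero>"
    by (simp add: is_big_join_def bot_le)
  then show ?case
    by (simp add: big_join_eqI)
next
  case (insert s S)
  then have "is_big_join (insert s S) (s \<squnion> \<Squnion>S)"
    by (auto simp: is_big_join_def join_le_iff)
  then show ?case
    by (simp add: big_join_eqI)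
qed

lemma big_meet_closed [simp]: "finite S \<Longrightarrow> S \<subseteq> car A \<Longrightarrow> \<Sqinter>S \<in> car A"
  using is_big_meet_big_meet[of S] by (simp add: is_big_meet_def)

lemma big_join_closed [simp]: "finite S \<Longrightarrow> S \<subseteq> car A \<Longrightarrow> \<Squnion>S \<in> car A"
  using is_big_join_big_join[of S] by (simp add: is_big_join_def)

lemma le_big_meet_iff:
  "finite S \<Longrightarrow> S \<subseteq> car A \<Longrightarrow> x \<in> car A \<Longrightarrow> x \<preceq> \<Sqinter>S \<longleftrightarrow> (\<forall>s\<in>S. x \<preceq> s)"
  using is_big_meet_big_meet[of S] by (simp add: is_big_meet_def)

lemma big_join_le_iff:
  "finite S \<Longrightarrow> S \<subseteq> car A \<Longrightarrow> x \<in> car A \<Longrightarrow> \<Squnion>S \<preceq> x \<longleftrightarrow> (\<forall>s\<in>S. s \<preceq> x)"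
  using is_big_join_big_join[of S] by (simp add: is_big_join_def)

lemma big_meet_lower:
  "finite S \<Longrightarrow> S \<subseteq> car A \<Longrightarrow> s \<in> S \<Longrightarrow> \<Sqinter>S \<preceq> s"
  using le_big_meet_iff le_refl big_meet_closed by blast

lemma big_join_upper:
  "finite S \<Longrightarrow> S \<subseteq> car A \<Longrightarrow> s \<in> S \<Longrightarrow> s \<preceq> \<Squnion>S"
  using big_join_le_iff le_refl big_join_closed by blast

lemma big_meet_empty: "\<Sqinter>{} = \<one>"
  by (rule big_meet_eqI) (simp add: is_big_meet_def le_top)

lemma big_join_empty: "\<Squnion>{} = \<zero>"
  by (rule big_join_eqI) (simp add: is_big_join_def bot_le)

lemma big_meet_singleton: "x \<in> car A \<Longrightarrow> \<Sqinter>{x} = x"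
  by (rule big_meet_eqI) (simp add: is_big_meet_def)

lemma big_join_singleton: "x \<in> car A \<Longrightarrow> \<Squnion>{x} = x"
  by (rule big_join_eqI) (simp add: is_big_join_def)

lemma big_meet_union:
  "finite S \<Longrightarrow> S \<subseteq> car A \<Longrightarrow> finite T \<Longrightarrow> T \<subseteq> car A \<Longrightarrow> \<Sqinter>(S \<union> T) = \<Sqinter>S \<sqinter> \<Sqinter>T"
  by (rule big_meet_eqI) (auto simp: is_big_meet_def le_meet_iff le_big_meet_iff)

lemma big_join_union:
  "finite S \<Longrightarrow> S \<subseteq> car A \<Longrightarrow> finite T \<Longrightarrow> T \<subseteq> car A \<Longrightarrow> \<Squnion>(S \<union> T) = \<Squnion>S \<squnion> \<Squnion>T"
  by (rule big_join_eqI) (auto simp: is_big_join_def join_le_iff big_join_le_iff)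

lemma big_meet_insert:
  "finite S \<Longrightarrow> S \<subseteq> car A \<Longrightarrow> x \<in> car A \<Longrightarrow> \<Sqinter>(insert x S) = x \<sqinter> \<Sqinter>S"
  using big_meet_union[of "{x}" S] by (simp add: big_meet_singleton)

lemma big_join_insert:
  "finite S \<Longrightarrow> S \<subseteq> car A \<Longrightarrow> x \<in> car A \<Longrightarrow> \<Squnion>(insert x S) = x \<squnion> \<Squnion>S"
  using big_join_union[of "{x}" S] by (simp add: big_join_singleton)

lemma meet_big_join_distrib:
  "finite S \<Longrightarrow> S \<subseteq> car A \<Longrightarrow> x \<in> car A \<Longrightarrow> x \<sqinter> \<Squnion>S = \<Squnion>((\<sqinter>) x ` S)"
proof (induction S rule: finite_induct)
  case empty
  then show ?case
    by (simp add: big_join_empty meet_comm[of x] bot_meet)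
next
  case (insert s S)
  then have "(\<sqinter>) x ` S \<subseteq> car A"
    by (blast intro: closed(3))
  with insert show ?case
    by (simp add: big_join_insert meet_join_distrib)
qed

lemma join_big_meet_distrib:
  "finite S \<Longrightarrow> S \<subseteq> car A \<Longrightarrow> x \<in> car A \<Longrightarrow> x \<squnion> \<Sqinter>S = \<Sqinter>((\<squnion>) x ` S)"
proof (induction S rule: finite_induct)
  case empty
  then show ?case
    by (simp add: big_meet_empty join_comm[of x] top_join)
next
  case (insert s S)
  then have "(\<squnion>) x ` S \<subseteq> car A"
    by (blast intro: closed(4))
  with insert show ?case
    by (simp add: big_meet_insert join_meet_distrib)
qed

lemma big_join_meet_big_join:
  assumes "finite S" "S \<subseteq> car A" "finite T" "T \<subseteq> car A"
  shows "\<Squnion>S \<sqinter> \<Squnion>T = \<Squnion>{s \<sqinter> t |s t. s \<in> S \<and> t \<in> T}"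
  using assms(1,2)
proof (induction S rule: finite_induct)
  case empty
  then show ?case
    using assms by (simp add: big_join_empty bot_meet)
next
  case (insert s S)
  let ?ST = "{s \<sqinter> t |s t. s \<in> S \<and> t \<in> T}"
  have ST: "finite ?ST" "?ST \<subseteq> car A"
    using insert assms by (auto simp: finite_image_set2 intro: closed(3))
  have "\<Squnion>(insert s S) \<sqinter> \<Squnion>T = s \<sqinter> \<Squnion>T \<squnion> \<Squnion>S \<sqinter> \<Squnion>T"
    using insert assms by (simp add: big_join_insert meet_join_distrib_right)
  also have "\<dots> = \<Squnion>((\<sqinter>) s ` T) \<squnion> \<Squnion>?ST"
    using insert assms by (simp add: meet_big_join_distrib)
  also have "\<dots> = \<Squnion>((\<sqinter>) s ` T \<union> ?ST)"
    using insert assms ST by (subst big_join_union) (auto intro: closed(3))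
  also have "(\<sqinter>) s ` T \<union> ?ST = {s' \<sqinter> t |s' t. s' \<in> insert s S \<and> t \<in> T}"
    by blast
  finally show ?case .
qed

end

section \<open>Finite bounded sublattices\<close>

locale finite_sublattice = whb +
  fixes D :: "'a set"
  assumes finite_D: "finite D"
    and D_subset: "D \<subseteq> car A"
    and bot_in_D: "\<zero> \<in> D"
    and top_in_D: "\<one> \<in> D"
    and meet_in_D: "x \<in> D \<Longrightarrow> y \<in> D \<Longrightarrow> x \<sqinter> y \<in> D"
    and join_in_D: "x \<in> D \<Longrightarrow> y \<in> D \<Longrightarrow> x \<squnion> y \<in> D"

lemma (in whb) finite_sublattice_big_join_image:
  assumes "finite M" "M \<subseteq> car A" "\<one> \<in> M"
    and meet_in_M: "\<And>x y. x \<in> M \<Longrightarrow> y \<in> M \<Longrightarrow> x \<sqinter> y \<in> M"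
  shows "finite_sublattice A (big_join ` Pow M)"
proof
  have subset_M: "S \<subseteq> M \<Longrightarrow> finite S \<and> S \<subseteq> car A" for S
    using assms(1,2) finite_subset by blast
  show "finite (big_join ` Pow M)" "big_join ` Pow M \<subseteq> car A"
    using assms(1) subset_M by auto
  show "\<zero> \<in> big_join ` Pow M"
    by (rule image_eqI[of _ _ "{}"]) (simp_all add: big_join_empty)
  show "\<one> \<in> big_join ` Pow M"
    by (rule image_eqI[of _ _ "{\<one>}"]) (simp_all add: big_join_singleton assms(3))
  fix x y assume "x \<in> big_join ` Pow M" "y \<in> big_join ` Pow M"
  then obtain S T where ST: "S \<subseteq> M" "T \<subseteq> M" "x = \<Squnion>S" "y = \<Squnion>T"
    by blast
  have "x \<sqinter> y = \<Squnion>{s \<sqinter> t |s t. s \<in> S \<and> t \<in> T}"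
    using ST subset_M by (simp add: big_join_meet_big_join)
  moreover have "{s \<sqinter> t |s t. s \<in> S \<and> t \<in> T} \<subseteq> M"
    using ST meet_in_M by blast
  ultimately show "x \<sqinter> y \<in> big_join ` Pow M"
    by blast
  have "x \<squnion> y = \<Squnion>(S \<union> T)"
    using ST subset_M by (simp add: big_join_union)
  with ST show "x \<squnion> y \<in> big_join ` Pow M"
    by blast
qed

lemma (in whb) finite_sublattice_generated:
  assumes "finite X" "X \<subseteq> car A"
  shows "\<exists>D. finite_sublattice A D \<and> X \<subseteq> D"
proof (intro exI conjI)
  let ?M = "big_meet ` Pow X"
  have subset_X: "S \<subseteq> X \<Longrightarrow> finite S \<and> S \<subseteq> car A" for S
    using assms finite_subset by blast
  have "x \<sqinter> y \<in> ?M" if "x \<in> ?M" "y \<in> ?M" for x y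
  proof -
    from that obtain S T where "S \<subseteq> X" "T \<subseteq> X" "x = \<Sqinter>S" "y = \<Sqinter>T"
      by blast
    then have "x \<sqinter> y = \<Sqinter>(S \<union> T)" and "S \<union> T \<subseteq> X"
      using subset_X by (simp_all add: big_meet_union)
    then show ?thesis
      by blast
  qed
  moreover have "\<one> \<in> ?M"
    by (rule image_eqI[of _ _ "{}"]) (simp_all add: big_meet_empty)
  ultimately show "finite_sublattice A (big_join ` Pow ?M)"
    using assms subset_X by (intro finite_sublattice_big_join_image) auto
  show "X \<subseteq> big_join ` Pow ?M"
  proof
    fix x assume "x \<in> X"
    then have "x = \<Squnion>{\<Sqinter>{x}}" and "{\<Sqinter>{x}} \<in> Pow ?M"
      using assms by (auto simp: big_meet_singleton big_join_singleton)
    then show "x \<in> big_join ` Pow ?M"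
      by blast
  qed
qed

context finite_sublattice
begin

lemma in_D_car [simp]: "x \<in> D \<Longrightarrow> x \<in> car A"
  and subset_D_car [simp]: "S \<subseteq> D \<Longrightarrow> S \<subseteq> car A"
  using D_subset by blast+

lemma big_meet_in_D:
  assumes "S \<subseteq> D"
  shows "\<Sqinter>S \<in> D"
proof -
  have "finite S"
    using assms finite_D finite_subset by blast
  then show ?thesis
    using assms by (induction S rule: finite_induct) (auto simp: big_meet_empty big_meet_insert top_in_D meet_in_D)
qed

lemma big_join_in_D:
  assumes "S \<subseteq> D"
  shows "\<Squnion>S \<in> D"
proof -
  have "finite S"
    using assms finite_D finite_subset by blast
  then show ?thesis
    using assms by (induction S rule: finite_induct) (auto simp: big_join_empty big_join_insert bot_in_D join_in_D)
qed

lemma D_eqI_lower: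
  "x \<in> D \<Longrightarrow> y \<in> D \<Longrightarrow> (\<And>d. d \<in> D \<Longrightarrow> d \<preceq> x \<longleftrightarrow> d \<preceq> y) \<Longrightarrow> x = y"
  by (meson in_D_car le_antisym le_refl)

lemma D_eqI_upper:
  "x \<in> D \<Longrightarrow> y \<in> D \<Longrightarrow> (\<And>d. d \<in> D \<Longrightarrow> x \<preceq> d \<longleftrightarrow> y \<preceq> d) \<Longrightarrow> x = y"
  by (meson in_D_car le_antisym le_refl)

definition below :: "'a \<Rightarrow> 'a" where
  "below x = \<Squnion>{d \<in> D. d \<preceq> x}"

definition above :: "'a \<Rightarrow> 'a" where
  "above x = \<Sqinter>{d \<in> D. x \<preceq> d}"

definition himp :: "'a \<Rightarrow> 'a \<Rightarrow> 'a" where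
  "himp x y = \<Squnion>{d \<in> D. x \<sqinter> d \<preceq> y}"

definition hcoimp :: "'a \<Rightarrow> 'a \<Rightarrow> 'a" where
  "hcoimp x y = \<Sqinter>{d \<in> D. x \<preceq> y \<squnion> d}"

lemma finite_D_part: "finite {d \<in> D. P d}" and D_part_subset: "{d \<in> D. P d} \<subseteq> car A"
  using finite_D D_subset by auto

lemma below_in_D [simp]: "below x \<in> D"
  and above_in_D [simp]: "above x \<in> D"
  and himp_in_D [simp]: "himp x y \<in> D"
  and hcoimp_in_D [simp]: "hcoimp x y \<in> D"
  by (simp_all add: below_def above_def himp_def hcoimp_def big_join_in_D big_meet_in_D)

lemma below_le: "x \<in> car A \<Longrightarrow> below x \<preceq> x"
  unfolding below_def by (simp add: big_join_le_iff finite_D_part D_part_subset)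

lemma le_above: "x \<in> car A \<Longrightarrow> x \<preceq> above x"
  unfolding above_def by (simp add: le_big_meet_iff finite_D_part D_part_subset)

lemma meet_himp_le:
  assumes "x \<in> car A" "y \<in> car A"
  shows "x \<sqinter> himp x y \<preceq> y"
proof -
  have "x \<sqinter> himp x y = \<Squnion>((\<sqinter>) x ` {d \<in> D. x \<sqinter> d \<preceq> y})"
    unfolding himp_def using assms by (simp add: meet_big_join_distrib finite_D_part D_part_subset)
  also have "\<dots> \<preceq> y"
    using assms by (subst big_join_le_iff) (auto simp: finite_D_part)
  finally show ?thesis .
qed

lemma le_join_hcoimp:
  assumes "x \<in> car A" "y \<in> car A"
  shows "x \<preceq> y \<squnion> hcoimp x y"
proof -
  have "y \<squnion> hcoimp x y = \<Sqinter>((\<squnion>) y ` {d \<in> D. x \<preceq> y \<squnion> d})"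
    unfolding hcoimp_def using assms by (simp add: join_big_meet_distrib finite_D_part D_part_subset)
  moreover have "x \<preceq> \<Sqinter>((\<squnion>) y ` {d \<in> D. x \<preceq> y \<squnion> d})"
    using assms by (subst le_big_meet_iff) (auto simp: finite_D_part)
  ultimately show ?thesis
    by simp
qed

lemma le_below_iff:
  "x \<in> car A \<Longrightarrow> d \<in> D \<Longrightarrow> d \<preceq> below x \<longleftrightarrow> d \<preceq> x"
  using below_le[of x] le_trans[of d "below x" x]
  by (auto simp: below_def big_join_upper finite_D_part D_part_subset)

lemma above_le_iff:
  "x \<in> car A \<Longrightarrow> d \<in> D \<Longrightarrow> above x \<preceq> d \<longleftrightarrow> x \<preceq> d"
  using le_above[of x] le_trans[of x "above x" d]
  by (auto simp: above_def big_meet_lower finite_D_part D_part_subset)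

lemma le_himp_iff:
  assumes "x \<in> car A" "y \<in> car A" "d \<in> D"
  shows "d \<preceq> himp x y \<longleftrightarrow> x \<sqinter> d \<preceq> y"
proof
  assume "d \<preceq> himp x y"
  then have "x \<sqinter> d \<preceq> x \<sqinter> himp x y"
    using assms by (simp add: meet_mono le_refl)
  then show "x \<sqinter> d \<preceq> y"
    using assms meet_himp_le le_trans[of "x \<sqinter> d" "x \<sqinter> himp x y" y] by simp
next
  assume "x \<sqinter> d \<preceq> y"
  then show "d \<preceq> himp x y"
    using assms by (simp add: himp_def big_join_upper finite_D_part D_part_subset)
qed

lemma hcoimp_le_iff:
  assumes "x \<in> car A" "y \<in> car A" "d \<in> D"
  shows "hcoimp x y \<preceq> d \<longleftrightarrow> x \<preceq> y \<squnion> d"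
proof
  assume "hcoimp x y \<preceq> d"
  then have "y \<squnion> hcoimp x y \<preceq> y \<squnion> d"
    using assms by (simp add: join_mono le_refl)
  then show "x \<preceq> y \<squnion> d"
    using assms le_join_hcoimp le_trans[of x "y \<squnion> hcoimp x y" "y \<squnion> d"] by simp
next
  assume "x \<preceq> y \<squnion> d"
  then show "hcoimp x y \<preceq> d"
    using assms by (simp add: hcoimp_def big_meet_lower finite_D_part D_part_subset)
qed

lemma below_meet:
  "x \<in> car A \<Longrightarrow> y \<in> car A \<Longrightarrow> below (x \<sqinter> y) = below x \<sqinter> below y"
  by (rule D_eqI_lower) (simp_all add: meet_in_D le_below_iff le_meet_iff)

lemma below_top: "below \<one> = \<one>"
  by (rule D_eqI_lower) (simp_all add: top_in_D le_below_iff le_top)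

lemma below_mono:
  "x \<in> car A \<Longrightarrow> y \<in> car A \<Longrightarrow> x \<preceq> y \<Longrightarrow> below x \<preceq> below y"
  by (metis below_in_D below_le in_D_car le_below_iff le_trans)

lemma above_join:
  "x \<in> car A \<Longrightarrow> y \<in> car A \<Longrightarrow> above (x \<squnion> y) = above x \<squnion> above y"
  by (rule D_eqI_upper) (simp_all add: join_in_D above_le_iff join_le_iff)

lemma above_bot: "above \<zero> = \<zero>"
  by (rule D_eqI_upper) (simp_all add: bot_in_D above_le_iff bot_le)

lemma above_mono:
  "x \<in> car A \<Longrightarrow> y \<in> car A \<Longrightarrow> x \<preceq> y \<Longrightarrow> above x \<preceq> above y"
  by (metis above_in_D le_above in_D_car above_le_iff le_trans)

lemma himp_self: "x \<in> car A \<Longrightarrow> himp x x = \<one>"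
  by (rule D_eqI_lower) (simp_all add: top_in_D le_himp_iff le_top meet_le1)

lemma himp_meet:
  "x \<in> car A \<Longrightarrow> y \<in> car A \<Longrightarrow> z \<in> car A \<Longrightarrow> himp x (y \<sqinter> z) = himp x y \<sqinter> himp x z"
  by (rule D_eqI_lower) (simp_all add: meet_in_D le_himp_iff le_meet_iff)

lemma himp_join:
  "x \<in> car A \<Longrightarrow> y \<in> car A \<Longrightarrow> z \<in> car A \<Longrightarrow> himp (x \<squnion> y) z = himp x z \<sqinter> himp y z"
  by (rule D_eqI_lower) (simp_all add: meet_in_D le_himp_iff le_meet_iff meet_join_distrib_right join_le_iff)

lemma himp_trans:
  assumes "x \<in> car A" "y \<in> car A" "z \<in> car A"
  shows "himp x y \<sqinter> himp y z \<preceq> himp x z"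
proof -
  have "x \<sqinter> (himp x y \<sqinter> himp y z) \<preceq> y \<sqinter> himp y z"
    using assms by (simp add: meet_assoc meet_mono meet_himp_le le_refl)
  moreover have "y \<sqinter> himp y z \<preceq> z"
    using assms by (simp add: meet_himp_le)
  ultimately have "x \<sqinter> (himp x y \<sqinter> himp y z) \<preceq> z"
    using assms le_trans[of "x \<sqinter> (himp x y \<sqinter> himp y z)" "y \<sqinter> himp y z" z] by simp
  then show ?thesis
    using assms by (simp add: le_himp_iff meet_in_D)
qed

lemma top_himp: "x \<in> D \<Longrightarrow> himp \<one> x = x"
  by (rule D_eqI_lower) (simp_all add: le_himp_iff top_meet)

lemma hcoimp_self: "x \<in> car A \<Longrightarrow> hcoimp x x = \<zero>"
  by (rule D_eqI_upper) (simp_all add: bot_in_D hcoimp_le_iff bot_le join_ge1)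

lemma hcoimp_join:
  "x \<in> car A \<Longrightarrow> y \<in> car A \<Longrightarrow> z \<in> car A \<Longrightarrow> hcoimp (x \<squnion> y) z = hcoimp x z \<squnion> hcoimp y z"
  by (rule D_eqI_upper) (simp_all add: join_in_D hcoimp_le_iff join_le_iff)

lemma hcoimp_meet:
  "x \<in> car A \<Longrightarrow> y \<in> car A \<Longrightarrow> z \<in> car A \<Longrightarrow> hcoimp x (y \<sqinter> z) = hcoimp x y \<squnion> hcoimp x z"
  by (rule D_eqI_upper) (simp_all add: join_in_D hcoimp_le_iff join_le_iff join_meet_distrib_right le_meet_iff)

lemma hcoimp_trans:
  assumes "x \<in> car A" "y \<in> car A" "z \<in> car A"
  shows "hcoimp x z \<preceq> hcoimp x y \<squnion> hcoimp y z"
proof -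
  have "y \<squnion> hcoimp x y \<preceq> z \<squnion> hcoimp y z \<squnion> hcoimp x y"
    using assms by (simp add: join_mono le_join_hcoimp le_refl)
  also have "z \<squnion> hcoimp y z \<squnion> hcoimp x y = z \<squnion> (hcoimp x y \<squnion> hcoimp y z)"
    using assms by (simp add: join_assoc[symmetric] join_comm[of "hcoimp y z"])
  finally have "x \<preceq> z \<squnion> (hcoimp x y \<squnion> hcoimp y z)"
    using assms le_join_hcoimp[of x y]
      le_trans[of x "y \<squnion> hcoimp x y" "z \<squnion> (hcoimp x y \<squnion> hcoimp y z)"]
    by simp
  then show ?thesis
    using assms by (simp add: hcoimp_le_iff join_in_D)
qed

lemma hcoimp_bot: "x \<in> D \<Longrightarrow> hcoimp x \<zero> = x"
  by (rule D_eqI_upper) (simp_all add: hcoimp_le_iff bot_join)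

section \<open>The filtration through a finite sublattice\<close>

lemma above_dia_below_box_le: "x \<in> D \<Longrightarrow> above (\<diamond>below (\<box>x)) \<preceq> x"
  by (simp add: above_le_iff dia_le_iff_le_box below_le)

lemma le_below_box_above_dia: "x \<in> D \<Longrightarrow> x \<preceq> below (\<box>above (\<diamond>x))"
  by (simp add: le_below_iff flip: dia_le_iff_le_box) (simp add: le_above)

definition filtration :: "'a whb_struct" where
  "filtration = \<lparr>car = D, mt = mt A, jn = jn A,
     im = \<lambda>x y. below (\<box>himp x y), coim = \<lambda>x y. above (\<diamond>hcoimp x y), zr = \<zero>, on = \<one>\<rparr>"

lemma filtration_simps [simp]:
  "car filtration = D" "mt filtration = mt A" "jn filtration = jn A"
  "zr filtration = \<zero>" "on filtration = \<one>"
  by (simp_all add: filtration_def)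

lemma im_filtration: "im filtration x y = below (\<box>himp x y)"
  and coim_filtration: "coim filtration x y = above (\<diamond>hcoimp x y)"
  by (simp_all add: filtration_def)

lemma leq_filtration [simp]: "leq filtration = leq A"
  by (simp add: fun_eq_iff leq_def)

lemma bdl_filtration: "bdl filtration"
  unfolding bdl_def filtration_simps
  by (intro conjI ballI;
      (rule bot_in_D top_in_D meet_in_D join_in_D meet_comm join_comm meet_assoc join_assoc
        meet_absorb join_absorb meet_join_distrib bot_meet top_join)?; simp)

lemma im_filtration_trans:
  assumes "x \<in> D" "y \<in> D" "z \<in> D"
  shows "im filtration x y \<sqinter> im filtration y z \<preceq> im filtration x z"
proof -
  have "below (\<box>(himp x y \<sqinter> himp y z)) \<preceq> below (\<box>himp x z)"
    using assms by (simp add: below_mono box_mono himp_trans meet_in_D)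
  then show ?thesis
    by (simp add: im_filtration box_meet below_meet)
qed

lemma coim_filtration_trans:
  assumes "x \<in> D" "y \<in> D" "z \<in> D"
  shows "coim filtration x z \<preceq> coim filtration x y \<squnion> coim filtration y z"
proof -
  have "above (\<diamond>hcoimp x z) \<preceq> above (\<diamond>(hcoimp x y \<squnion> hcoimp y z))"
    using assms by (simp add: above_mono dia_mono hcoimp_trans join_in_D)
  then show ?thesis
    by (simp add: coim_filtration dia_join above_join)
qed

lemma meet_coim_im_filtration_le:
  assumes "x \<in> D" "y \<in> D"
  shows "x \<sqinter> coim filtration (im filtration x y) \<zero> \<preceq> y"
proof -
  have "x \<sqinter> above (\<diamond>below (\<box>himp x y)) \<preceq> x \<sqinter> himp x y"
    using assms by (simp add: meet_mono le_refl above_dia_below_box_le)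
  then show ?thesis
    using assms meet_himp_le[of x y] le_trans[of _ "x \<sqinter> himp x y" y]
    by (simp add: im_filtration coim_filtration hcoimp_bot)
qed

lemma le_join_im_coim_filtration:
  assumes "x \<in> D" "y \<in> D"
  shows "x \<preceq> y \<squnion> im filtration \<one> (coim filtration x y)"
proof -
  have "y \<squnion> hcoimp x y \<preceq> y \<squnion> below (\<box>above (\<diamond>hcoimp x y))"
    using assms by (simp add: join_mono le_refl le_below_box_above_dia)
  then have "x \<preceq> y \<squnion> below (\<box>above (\<diamond>hcoimp x y))"
    using assms le_join_hcoimp[of x y]
      le_trans[of x "y \<squnion> hcoimp x y" "y \<squnion> below (\<box>above (\<diamond>hcoimp x y))"]
    by simp
  then show ?thesis
    by (simp add: im_filtration coim_filtration top_himp)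
qed

lemma whb_algebra_filtration: "whb_algebra filtration"
  unfolding whb_algebra_def leq_filtration
  using bdl_filtration im_filtration_trans coim_filtration_trans
    meet_coim_im_filtration_le le_join_im_coim_filtration
  by (simp add: im_filtration coim_filtration meet_in_D join_in_D himp_self box_top below_top
      himp_meet himp_join box_meet below_meet hcoimp_self dia_bot above_bot hcoimp_join hcoimp_meet
      dia_join above_join)

lemma im_filtration_eq_imp:
  assumes "x \<in> D" "y \<in> D" "x \<rightarrow> y \<in> D" "\<diamond>(x \<rightarrow> y) \<in> D"
  shows "im filtration x y = x \<rightarrow> y"
proof -
  have "below (\<box>himp x y) \<preceq> \<box>himp x y"
    using assms by (simp add: below_le)
  moreover have "\<box>himp x y \<preceq> x \<rightarrow> y"
    using assms by (simp add: box_le_imp meet_himp_le)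
  ultimately have "below (\<box>himp x y) \<preceq> x \<rightarrow> y"
    using assms le_trans[of "below (\<box>himp x y)" "\<box>himp x y" "x \<rightarrow> y"] by simp
  moreover have "x \<rightarrow> y \<preceq> below (\<box>himp x y)"
  proof -
    have "x \<sqinter> \<diamond>(x \<rightarrow> y) \<preceq> y"
      using assms meet_coimp_imp_le[of x y] by (simp add: dia_def)
    then have "\<diamond>(x \<rightarrow> y) \<preceq> himp x y"
      using assms by (simp add: le_himp_iff)
    then show ?thesis
      using assms by (simp add: le_below_iff flip: dia_le_iff_le_box)
  qed
  ultimately show ?thesis
    using assms by (simp add: im_filtration le_antisym)
qed

lemma coim_filtration_eq_coimp:
  assumes "x \<in> D" "y \<in> D" "x \<leftarrow> y \<in> D" "\<box>(x \<leftarrow> y) \<in> D"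
  shows "coim filtration x y = x \<leftarrow> y"
proof -
  have "x \<leftarrow> y \<preceq> \<diamond>hcoimp x y"
    using assms by (simp add: coimp_le_dia le_join_hcoimp)
  moreover have "\<diamond>hcoimp x y \<preceq> above (\<diamond>hcoimp x y)"
    using assms by (simp add: le_above)
  ultimately have "x \<leftarrow> y \<preceq> above (\<diamond>hcoimp x y)"
    using assms le_trans[of "x \<leftarrow> y" "\<diamond>hcoimp x y" "above (\<diamond>hcoimp x y)"] by simp
  moreover have "above (\<diamond>hcoimp x y) \<preceq> x \<leftarrow> y"
  proof -
    have "x \<preceq> y \<squnion> \<box>(x \<leftarrow> y)"
      using assms le_join_imp_coimp[of x y] by (simp add: box_def)
    then have "hcoimp x y \<preceq> \<box>(x \<leftarrow> y)"
      using assms by (simp add: hcoimp_le_iff)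
    then show ?thesis
      using assms by (simp add: above_le_iff dia_le_iff_le_box)
  qed
  ultimately show ?thesis
    using assms by (simp add: coim_filtration le_antisym)
qed

end

primrec subterms :: "trm \<Rightarrow> trm set" where
  "subterms (Var n) = {Var n}"
| "subterms (Meet s t) = insert (Meet s t) (subterms s \<union> subterms t)"
| "subterms (Join s t) = insert (Join s t) (subterms s \<union> subterms t)"
| "subterms (Imp s t) = insert (Imp s t) (subterms s \<union> subterms t)"
| "subterms (Coimp s t) = insert (Coimp s t) (subterms s \<union> subterms t)"
| "subterms Bot = {Bot}"
| "subterms Top = {Top}"

lemma finite_subterms: "finite (subterms t)"
  by (induction t) auto

lemma subterms_refl: "t \<in> subterms t"
  by (cases t) auto

lemma (in whb) eval_closed: "\<forall>n. v n \<in> car A \<Longrightarrow> eval A v t \<in> car A"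
  by (induction t) simp_all

context finite_sublattice
begin

lemma eval_filtration:
  assumes "\<forall>w\<in>subterms t. eval A v w \<in> D \<and> \<diamond>eval A v w \<in> D \<and> \<box>eval A v w \<in> D"
  shows "eval filtration (\<lambda>n. if v n \<in> D then v n else \<zero>) t = eval A v t"
  using assms
  by (induction t) (simp_all add: subterms_refl im_filtration_eq_imp coim_filtration_eq_coimp)

end

lemma (in whb) finite_refutation:
  assumes "\<not> holds A s t"
  shows "\<exists>B :: 'a whb_struct. whb_algebra B \<and> finite (car B) \<and> \<not> holds B s t"
proof -
  obtain v where v: "\<forall>n. v n \<in> car A" and neq: "eval A v s \<noteq> eval A v t"
    using assms unfolding holds_def by blast
  define X where
    "X = (\<Union>w \<in> subterms s \<union> subterms t. {eval A v w, \<diamond>eval A v w, \<box>eval A v w})"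
  have "finite X" "X \<subseteq> car A"
    using v by (auto simp: X_def finite_subterms eval_closed)
  then obtain D where D: "finite_sublattice A D" and "X \<subseteq> D"
    using finite_sublattice_generated by blast
  interpret finite_sublattice A D
    by (fact D)
  define v' where "v' = (\<lambda>n. if v n \<in> D then v n else \<zero>)"
  have "eval filtration v' s = eval A v s" "eval filtration v' t = eval A v t"
    using \<open>X \<subseteq> D\<close> unfolding v'_def by (auto simp: X_def intro!: eval_filtration)
  moreover have "\<forall>n. v' n \<in> car filtration"
    by (simp add: v'_def bot_in_D)
  ultimately have "\<not> holds filtration s t"
    using neq unfolding holds_def by metis
  then show ?thesis
    using whb_algebra_filtration finite_D by auto
qed

section \<open>Transport along an injection\<close>

definition whb_image :: "('a \<Rightarrow> 'c) \<Rightarrow> ('a, 'b) whb_struct_scheme \<Rightarrow> 'c whb_struct" where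
  "whb_image f B = (let g = inv_into (car B) f in
     \<lparr>car = f ` car B, mt = \<lambda>x y. f (mt B (g x) (g y)), jn = \<lambda>x y. f (jn B (g x) (g y)),
      im = \<lambda>x y. f (im B (g x) (g y)), coim = \<lambda>x y. f (coim B (g x) (g y)),
      zr = f (zr B), on = f (on B)\<rparr>)"

lemma whb_image_simps [simp]:
  "car (whb_image f B) = f ` car B" "zr (whb_image f B) = f (zr B)" "on (whb_image f B) = f (on B)"
  by (simp_all add: whb_image_def Let_def)

lemma whb_image_hom:
  assumes "inj_on f (car B)" "x \<in> car B" "y \<in> car B"
  shows "mt (whb_image f B) (f x) (f y) = f (mt B x y)"
    and "jn (whb_image f B) (f x) (f y) = f (jn B x y)"
    and "im (whb_image f B) (f x) (f y) = f (im B x y)"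
    and "coim (whb_image f B) (f x) (f y) = f (coim B x y)"
  using assms by (simp_all add: whb_image_def Let_def)

lemma whb_algebra_whb_image:
  assumes "whb_algebra B" "inj_on f (car B)"
  shows "whb_algebra (whb_image f B)"
proof -
  interpret whb B
    by (fact whb.intro[OF assms(1)])
  have "whb_algebra (whb_image f B) = whb_algebra B"
    unfolding whb_algebra_def bdl_def leq_def
    using assms(2) by (simp add: whb_image_hom inj_on_eq_iff cong: ball_cong)
  with assms(1) show ?thesis
    by simp
qed

lemma eval_whb_image:
  assumes "whb_algebra B" "inj_on f (car B)" "\<forall>n. v n \<in> car B"
  shows "eval (whb_image f B) (f \<circ> v) t = f (eval B v t)"
proof -
  interpret whb B
    by (fact whb.intro[OF assms(1)])
  show ?thesis
    using assms by (induction t) (simp_all add: whb_image_hom eval_closed)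
qed

lemma holds_whb_imageD:
  assumes "whb_algebra B" "inj_on f (car B)" "holds (whb_image f B) s t"
  shows "holds B s t"
  unfolding holds_def
proof (intro allI impI)
  interpret whb B
    by (fact whb.intro[OF assms(1)])
  fix v :: "nat \<Rightarrow> 'a"
  assume v: "\<forall>n. v n \<in> car B"
  then have "eval (whb_image f B) (f \<circ> v) s = eval (whb_image f B) (f \<circ> v) t"
    using assms(3) by (simp add: holds_def)
  then have "f (eval B v s) = f (eval B v t)"
    using assms(1,2) v by (simp add: eval_whb_image)
  then show "eval B v s = eval B v t"
    using assms(2) v by (simp add: inj_on_eq_iff eval_closed)
qed

theorem corollary6p20:
  fixes A :: "'a whb_struct" and s t :: trm
  assumes "whb_algebra A" and "\<not> holds A s t"
  shows "\<exists>B :: nat whb_struct. whb_algebra B \<and> finite (car B) \<and> \<not> holds B s t"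
proof -
  interpret whb A
    by (fact whb.intro[OF assms(1)])
  obtain B :: "'a whb_struct" where B: "whb_algebra B" "finite (car B)" "\<not> holds B s t"
    using finite_refutation[OF assms(2)] by blast
  obtain f :: "'a \<Rightarrow> nat" where f: "inj_on f (car B)"
    using finite_imp_inj_to_nat_seg[OF B(2)] by blast
  show ?thesis
  proof (intro exI conjI)
    show "whb_algebra (whb_image f B)"
      using B(1) f by (rule whb_algebra_whb_image)
    show "finite (car (whb_image f B))"
      using B(2) by simp
    show "\<not> holds (whb_image f B) s t"
      using B(1,3) f holds_whb_imageD by blast
  qed
qed

end
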